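(* For any two finite structures $\mathcal M$ and $\mathcal N$ over a vocabulary containing the binary relation symbol $E$, and any points $w\in\mathrm{DOM}(\mathcal M)$ and $u\in\mathrm{DOM}(\mathcal N)$, we have $\mathsf{WL}^\infty(\mathcal M,w)=\mathsf{WL}^\infty(\mathcal N,u)$ if and only if $\mathcal M\uplus\mathcal N\models\varphi_{\mathsf{WL}}(w,u)$, where $\varphi_{\mathsf{WL}}(x,y) := \mathrm{GFP}_{W,x,y}\big[Wxy\land\forall z\,\big(Hyx[\,Exy\land Wyz,\ Eyx\land Wxz\,]\big)\big]$.
   Context: $\mathcal M\uplus\mathcal N$ is the disjoint union of $\mathcal M$ and $\mathcal N$ (domains and relations taken as disjoint unions). Weisfeiler–Leman colors with respect to $E$: $c^{\mathcal M}_0(w)=\ast$ (a fixed constant), $c^{\mathcal M}_{t+1}(w)=\big(c^{\mathcal M}_t(w),\{\{c^{\mathcal M}_t(v):(w,v)\in E^{\mathcal M}\}\}\big)$ (multiset); $\mathsf{WL}^\infty(\mathcal M,w)=\mathsf{WL}^\infty(\mathcal N,u)$ means that $w$ and $u$ receive the same stable Weisfeiler–Leman color, i.e. $c^{\mathcal M}_t(w)=c^{\mathcal N}_t(u)$ for all $t\in\mathbb N$. First-order logic is extended as follows. Härtig's quantifier: for formulae $\varphi,\psi$ and variables $x,y$, $Hxy[\varphi,\psi]$ is a formula, true in a structure $\mathcal A$ under an assignment $s$ iff $|\{a\in\mathrm{DOM}(\mathcal A):\mathcal A\models\varphi[s(x\mapsto a)]\}|=|\{b\in\mathrm{DOM}(\mathcal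 A):\mathcal A\models\psi[s(y\mapsto b)]\}|$ (so $x$ is bound in $\varphi$ and $y$ is bound in $\psi$). Greatest fixed points: for a formula $\varphi(x,y)$ (possibly with Härtig quantifiers) containing a binary relation symbol $W$, $\mathrm{GFP}_{W,x,y}[\varphi]$ is a formula with free variables $x,y$; in $\mathcal A$ let $W^0=\mathrm{DOM}(\mathcal A)^2$ and $W^{n+1}=\{(a,b)\in\mathrm{DOM}(\mathcal A)^2:\mathcal A\models\varphi(a,b)\text{ with }W\text{ interpreted as }W^n\}$; then $\mathcal A\models\mathrm{GFP}_{W,x,y}[\varphi](a,b)$ iff $(a,b)\in W^n$ for all $n\in\mathbb N$. *)

theory Defs
  imports Main "HOL-Library.Multiset"
begin

text \<open>Finite structures: only the binary relation symbol E matters for both sides of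
the theorem (WL colours and the formula mention only E), so a structure is
rendered by its domain and the interpretation of E.\<close>

record 'a struc =
  sdom :: "'a set"
  sE :: "('a \<times> 'a) set"

definition finite_struc :: "'a struc \<Rightarrow> bool" where
  "finite_struc M \<longleftrightarrow> finite (sdom M) \<and> sE M \<subseteq> sdom M \<times> sdom M"

definition dunion :: "'a struc \<Rightarrow> 'b struc \<Rightarrow> ('a + 'b) struc" where
  "dunion M N = \<lparr> sdom = Inl ` sdom M \<union> Inr ` sdom N,
     sE = map_prod Inl Inl ` sE M \<union> map_prod Inr Inr ` sE N \<rparr>"

datatype wlcolor = Star | Pair wlcolor "wlcolor multiset"

fun wl :: "'a struc \<Rightarrow> nat \<Rightarrow> 'a \<Rightarrow> wlcolor" where
  "wl M 0 w = Star"
| "wl M (Suc t) w = Pair (wl M t w) (image_mset (wl M t) (mset_set {v. (w, v) \<in> sE M}))"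

definition WL_inf_eq :: "'a struc \<Rightarrow> 'a \<Rightarrow> 'b struc \<Rightarrow> 'b \<Rightarrow> bool" where
  "WL_inf_eq M w N u \<longleftrightarrow> (\<forall>t. wl M t w = wl N t u)"

definition hartig :: "'a set \<Rightarrow> ('a \<Rightarrow> bool) \<Rightarrow> ('a \<Rightarrow> bool) \<Rightarrow> bool" where
  "hartig D P Q \<longleftrightarrow> card {a \<in> D. P a} = card {b \<in> D. Q b}"

fun gfp_stage :: "'a set \<Rightarrow> (('a \<Rightarrow> 'a \<Rightarrow> bool) \<Rightarrow> 'a \<Rightarrow> 'a \<Rightarrow> bool) \<Rightarrow> nat \<Rightarrow> 'a \<Rightarrow> 'a \<Rightarrow> bool" where
  "gfp_stage D \<Phi> 0 = (\<lambda>a b. a \<in> D \<and> b \<in> D)"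
| "gfp_stage D \<Phi> (Suc n) = (\<lambda>a b. a \<in> D \<and> b \<in> D \<and> \<Phi> (gfp_stage D \<Phi> n) a b)"

definition GFP :: "'a set \<Rightarrow> (('a \<Rightarrow> 'a \<Rightarrow> bool) \<Rightarrow> 'a \<Rightarrow> 'a \<Rightarrow> bool) \<Rightarrow> 'a \<Rightarrow> 'a \<Rightarrow> bool" where
  "GFP D \<Phi> a b \<longleftrightarrow> (\<forall>n. gfp_stage D \<Phi> n a b)"

text \<open>Body of \<phi>_WL, evaluated in structure A with W interpreted as the given relation:
  W x y \<and> \<forall>z. H y x [E x y \<and> W y z, E y x \<and> W x z]
  (y is bound in the first formula, x in the second).\<close>
definition phiWL_body :: "'a struc \<Rightarrow> ('a \<Rightarrow> 'a \<Rightarrow> bool) \<Rightarrow> 'a \<Rightarrow> 'a \<Rightarrow> bool" where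
  "phiWL_body A W x y \<longleftrightarrow> W x y \<and>
     (\<forall>z \<in> sdom A. hartig (sdom A) (\<lambda>y'. (x, y') \<in> sE A \<and> W y' z)
                                     (\<lambda>x'. (y, x') \<in> sE A \<and> W x' z))"

definition sat_phiWL :: "'a struc \<Rightarrow> 'a \<Rightarrow> 'a \<Rightarrow> bool" where
  "sat_phiWL A a b \<longleftrightarrow> GFP (sdom A) (phiWL_body A) a b"

end

(* By induction on n, the n-th approximation of the greatest fixed point is exactly equality
   of n-round WL colours: for each z, the Haertig quantifier compares the numbers of
   E-successors of x and of y lying in the colour class of z, and these numbers for all z
   determine the multisets of successor colours.  Since a vertex of a disjoint union only
   sees its own component, its colours there are its colours in that component. *)

theory Submission
  imports Defs
begin

lemma count_image_mset_mset_set: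
  assumes "finite A"
  shows "count (image_mset f (mset_set A)) k = card {v \<in> A. f v = k}"
proof -
  have "count (image_mset f (mset_set A)) k = (\<Sum>v \<in> {v \<in> A. f v = k}. 1)"
    unfolding count_image_mset using assms by (intro sum.cong) (auto simp: vimage_def)
  then show ?thesis by simp
qed

lemma image_mset_mset_set_eq_iff_card:
  assumes "finite A" "finite B" "A \<subseteq> D" "B \<subseteq> D"
  shows "image_mset f (mset_set A) = image_mset f (mset_set B) \<longleftrightarrow>
         (\<forall>z \<in> D. card {v \<in> A. f v = f z} = card {v \<in> B. f v = f z})"
proof
  assume "image_mset f (mset_set A) = image_mset f (mset_set B)"
  then show "\<forall>z \<in> D. card {v \<in> A. f v = f z} = card {v \<in> B. f v = f z}"
    using assms by (simp flip: count_image_mset_mset_set)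
next
  assume card_eq: "\<forall>z \<in> D. card {v \<in> A. f v = f z} = card {v \<in> B. f v = f z}"
  show "image_mset f (mset_set A) = image_mset f (mset_set B)"
  proof (rule multiset_eqI)
    fix k
    show "count (image_mset f (mset_set A)) k = count (image_mset f (mset_set B)) k"
    proof (cases "k \<in> f ` (A \<union> B)")
      case True
      then obtain z where "z \<in> D" "k = f z" using assms by blast
      then show ?thesis using assms card_eq by (simp add: count_image_mset_mset_set)
    next
      case False
      then have "k \<notin># image_mset f (mset_set A)" "k \<notin># image_mset f (mset_set B)"
        using assms by auto
      then show ?thesis by (metis not_in_iff)
    qed
  qed
qed

lemma wl_embedding:
  assumes "inj f" and succ: "\<And>x. {v. (f x, v) \<in> sE M'} = f ` {v. (x, v) \<in> sE M}"
  shows "wl M' n (f x) = wl M n x"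
proof (induction n arbitrary: x)
  case 0
  then show ?case by simp
next
  case (Suc n)
  have "image_mset (wl M' n) (mset_set (f ` {v. (x, v) \<in> sE M}))
      = image_mset (wl M' n \<circ> f) (mset_set {v. (x, v) \<in> sE M})"
    using inj_on_subset[OF \<open>inj f\<close> subset_UNIV]
    by (simp flip: image_mset_mset_set add: image_mset.compositionality)
  also have "\<dots> = image_mset (wl M n) (mset_set {v. (x, v) \<in> sE M})"
    using Suc by (intro image_mset_cong) simp
  finally show ?case using Suc by (simp add: succ)
qed

lemma wl_dunion_Inl: "wl (dunion M N) n (Inl w) = wl M n w"
  by (rule wl_embedding) (auto simp: dunion_def)

lemma wl_dunion_Inr: "wl (dunion M N) n (Inr u) = wl N n u"
  by (rule wl_embedding) (auto simp: dunion_def)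

lemma finite_struc_dunion:
  "finite_struc M \<Longrightarrow> finite_struc N \<Longrightarrow> finite_struc (dunion M N)"
  unfolding finite_struc_def dunion_def by auto

lemma phiWL_body_wl_eq:
  assumes U: "finite_struc U" and "a \<in> sdom U" "b \<in> sdom U"
  shows "phiWL_body U (\<lambda>x y. x \<in> sdom U \<and> y \<in> sdom U \<and> wl U n x = wl U n y) a b \<longleftrightarrow>
         wl U (Suc n) a = wl U (Suc n) b"
proof -
  let ?D = "sdom U" and ?c = "wl U n"
  define S where "S x = {v. (x, v) \<in> sE U}" for x
  have S_sub: "S x \<subseteq> ?D" for x using U unfolding finite_struc_def S_def by auto
  have S_fin: "finite (S x)" for x using S_sub U finite_subset unfolding finite_struc_def by metis
  have class_eq: "{v \<in> ?D. (x, v) \<in> sE U \<and> v \<in> ?D \<and> ?c v = k} = {v \<in> S x. ?c v = k}"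
    for x k
    using S_sub unfolding S_def by auto
  have "phiWL_body U (\<lambda>x y. x \<in> ?D \<and> y \<in> ?D \<and> ?c x = ?c y) a b \<longleftrightarrow>
     ?c a = ?c b \<and> (\<forall>z \<in> ?D. card {v \<in> S a. ?c v = ?c z} = card {v \<in> S b. ?c v = ?c z})"
    unfolding phiWL_body_def hartig_def using assms(2,3) by (simp add: class_eq)
  also have "\<dots> \<longleftrightarrow> ?c a = ?c b \<and> image_mset ?c (mset_set (S a)) = image_mset ?c (mset_set (S b))"
    using image_mset_mset_set_eq_iff_card[OF S_fin S_fin S_sub S_sub] by blast
  also have "\<dots> \<longleftrightarrow> wl U (Suc n) a = wl U (Suc n) b"
    by (simp add: S_def)
  finally show ?thesis .
qed

lemma gfp_stage_phiWL_body:
  assumes "finite_struc U"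
  shows "gfp_stage (sdom U) (phiWL_body U) n =
         (\<lambda>a b. a \<in> sdom U \<and> b \<in> sdom U \<and> wl U n a = wl U n b)"
proof (induction n)
  case 0
  then show ?case by simp
next
  case (Suc n)
  show ?case
  proof (intro ext)
    fix a b
    have "gfp_stage (sdom U) (phiWL_body U) (Suc n) a b \<longleftrightarrow> a \<in> sdom U \<and> b \<in> sdom U \<and>
          phiWL_body U (\<lambda>x y. x \<in> sdom U \<and> y \<in> sdom U \<and> wl U n x = wl U n y) a b"
      by (simp only: gfp_stage.simps Suc)
    then show "gfp_stage (sdom U) (phiWL_body U) (Suc n) a b \<longleftrightarrow>
          a \<in> sdom U \<and> b \<in> sdom U \<and> wl U (Suc n) a = wl U (Suc n) b"
      using phiWL_body_wl_eq[OF assms, of a b n] by blast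
  qed
qed

lemma sat_phiWL_iff_wl_eq:
  assumes "finite_struc U" "a \<in> sdom U" "b \<in> sdom U"
  shows "sat_phiWL U a b \<longleftrightarrow> (\<forall>n. wl U n a = wl U n b)"
  using assms by (simp add: sat_phiWL_def GFP_def gfp_stage_phiWL_body)

theorem theorem3:
  fixes M :: "'a struc" and N :: "'b struc" and w :: 'a and u :: 'b
  assumes "finite_struc M" and "finite_struc N"
    and "w \<in> sdom M" and "u \<in> sdom N"
  shows "WL_inf_eq M w N u \<longleftrightarrow> sat_phiWL (dunion M N) (Inl w) (Inr u)"
proof -
  have "Inl w \<in> sdom (dunion M N)" "Inr u \<in> sdom (dunion M N)"
    using assms(3,4) by (auto simp: dunion_def)
  then have "sat_phiWL (dunion M N) (Inl w) (Inr u) \<longleftrightarrow>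
             (\<forall>n. wl (dunion M N) n (Inl w) = wl (dunion M N) n (Inr u))"
    using sat_phiWL_iff_wl_eq[OF finite_struc_dunion[OF assms(1,2)]] by blast
  then show ?thesis
    by (simp add: WL_inf_eq_def wl_dunion_Inl wl_dunion_Inr)
qed

end
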